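(* For all constants $c_1,c_2$ with $0<c_1\le c_2<1$, for all sufficiently large $n$ with $t\le c_2 n$, and for all $k$ with $c_1 n\le k\le c_2 n$, the probability that the reverse reachable set of $B$ has exactly $k$ vertices is at most $\frac{1}{n^2}$.
   Context: Random graph model: $V$ is a set of $n$ vertices, $B\subseteq V$ a target set with $|B|=t$, each $v\in V$ has a prescribed out-degree $d_v$ with $2\le d_{\min}\le d_v\le d_{\max}$ (constants independent of $n$), and for each $v$ independently its out-neighbour set is chosen uniformly at random among all $d_v$-element subsets of $V$. The reverse reachable set of $B$ is the set of vertices having a directed path to a vertex of $B$. *)

theory Defs
  imports "HOL-Probability.Probability"
begin

text \<open>Outside V the out-neighbour set is the empty set.\<close>
definition out_nbhd_pmf :: "nat set \<Rightarrow> (nat \<Rightarrow> nat) \<Rightarrow> (nat \<Rightarrow> nat set) pmf" where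
  "out_nbhd_pmf V d = Pi_pmf V {} (\<lambda>v. pmf_of_set {S. S \<subseteq> V \<and> card S = d v})"

definition edges :: "nat set \<Rightarrow> (nat \<Rightarrow> nat set) \<Rightarrow> (nat \<times> nat) set" where
  "edges V N = {(x, y). x \<in> V \<and> y \<in> N x}"

definition reverse_reachable :: "nat set \<Rightarrow> (nat \<Rightarrow> nat set) \<Rightarrow> nat set \<Rightarrow> nat set" where
  "reverse_reachable V N B = {u \<in> V. \<exists>b\<in>B. (u, b) \<in> (edges V N)\<^sup>*}"

end

theory Submission
  imports Defs "HOL-Real_Asymp.Real_Asymp"
begin

text \<open>If the reverse reachable set R has k elements, then B \<subseteq> R and R is closed: no vertex
  outside R has an out-neighbour in R, while every vertex of R - B has one.  For a fixed k-set S
  this event has probability prod_{v \<notin> S} q_v * prod_{v \<in> S - B} (1 - q_v), where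
  q_v = C(n - k, d_v) / C(n, d_v) \<le> p^2 with p = 1 - k/n, because d_v \<ge> 2.  Summed over S this
  is the probability that independent Bernoulli(q_v) variables, v \<notin> B, add up to exactly
  r = n - k = p n, although their mean is at most p r.  An exponential-moment bound makes this
  at most exp(-r (1 - p)^2 / 4) = exp(-\<Omega>(n)), which is eventually below 1/n^2.\<close>

lemma Suc_times_binomial_real:
  "real (Suc d) * real (m choose Suc d) = (real m - real d) * real (m choose d)"
  using gbinomial_mult_1[of "real m" d] by (simp add: binomial_gbinomial algebra_simps)

lemma binomial_mult_power_le:
  assumes "a \<le> n"
  shows "real (a choose d) * real n ^ d \<le> real (n choose d) * real a ^ d"
proof (induction d)
  case 0
  show ?case by simp
next
  case (Suc d)
  show ?case
  proof (cases "d \<le> a")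
    case False
    then show ?thesis by (simp add: binomial_eq_0)
  next
    case True
    have "real d * real a \<le> real d * real n"
      using assms by (intro mult_left_mono) auto
    then have factor_le: "(real a - real d) * real n \<le> real a * (real n - real d)"
      by (simp add: algebra_simps)
    have "real (Suc d) * (real (a choose Suc d) * real n ^ Suc d)
        = (real a - real d) * real n * (real (a choose d) * real n ^ d)"
      unfolding mult.assoc[symmetric] Suc_times_binomial_real by (simp add: mult_ac)
    also have "\<dots> \<le> real a * (real n - real d) * (real (n choose d) * real a ^ d)"
      using True assms by (intro mult_mono[OF factor_le Suc.IH]) auto
    also have "\<dots> = real (Suc d) * (real (n choose Suc d) * real a ^ Suc d)"
      unfolding mult.assoc[symmetric] Suc_times_binomial_real by (simp add: mult_ac)
    finally show ?thesis
      by (simp only: mult_le_cancel_left_pos of_nat_0_less_iff zero_less_Suc)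
  qed
qed

lemma binomial_ratio_le_square:
  assumes "a \<le> n" "2 \<le> d"
  shows "real (a choose d) / real (n choose d) \<le> (real a / real n) ^ 2"
proof (cases "d \<le> n")
  case False
  then show ?thesis by (simp add: binomial_eq_0)
next
  case True
  have "real (a choose d) / real (n choose d) \<le> (real a / real n) ^ d"
    using binomial_mult_power_le[OF assms(1), of d] True assms
    by (simp add: field_simps)
  also have "\<dots> \<le> (real a / real n) ^ 2"
    using assms by (intro power_decreasing) (auto simp: divide_le_eq_1)
  finally show ?thesis .
qed

definition miss_prob :: "nat \<Rightarrow> nat \<Rightarrow> nat \<Rightarrow> real" where
  "miss_prob n k d = real ((n - k) choose d) / real (n choose d)"

lemma miss_prob_le_square:
  assumes "k \<le> n" "2 \<le> d"
  shows "miss_prob n k d \<le> (1 - real k / real n) ^ 2"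
proof -
  have "miss_prob n k d \<le> (real (n - k) / real n) ^ 2"
    unfolding miss_prob_def using assms by (intro binomial_ratio_le_square) auto
  also have "\<dots> \<le> (1 - real k / real n) ^ 2"
    using assms(1) by (cases "n = 0") (simp_all add: diff_divide_distrib)
  finally show ?thesis .
qed

lemma miss_prob_nonneg: "0 \<le> miss_prob n k d"
  by (simp add: miss_prob_def)

lemma binomial_mono_left:
  assumes "m \<le> n"
  shows "m choose k \<le> n choose k"
proof -
  have "card {T. T \<subseteq> {..<m} \<and> card T = k} \<le> card {T. T \<subseteq> {..<n} \<and> card T = k}"
    using assms by (intro card_mono) auto
  then show ?thesis
    by (simp add: n_subsets)
qed

lemma miss_prob_le_one: "miss_prob n k d \<le> 1"
  unfolding miss_prob_def
  by (cases "n choose d = 0") (simp_all add: divide_le_eq_1 binomial_mono_left)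

lemma measure_pmf_of_subsets_disjoint:
  assumes "finite V" "S \<subseteq> V" "d \<le> card V"
  shows "measure_pmf.prob (pmf_of_set {T. T \<subseteq> V \<and> card T = d}) {T. T \<inter> S = {}}
     = miss_prob (card V) (card S) d"
proof -
  have fin: "finite {T. T \<subseteq> V \<and> card T = d}" using assms(1) by auto
  have card_subsets: "card {T. T \<subseteq> V \<and> card T = d} = card V choose d"
    using n_subsets[OF assms(1)] .
  then have ne: "{T. T \<subseteq> V \<and> card T = d} \<noteq> {}"
    using assms(3) by (metis card.empty zero_less_binomial less_irrefl)
  have "{T. T \<subseteq> V \<and> card T = d} \<inter> {T. T \<inter> S = {}} = {T. T \<subseteq> V - S \<and> card T = d}"
    by auto
  moreover have "card {T. T \<subseteq> V - S \<and> card T = d} = (card V - card S) choose d"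
    using n_subsets[of "V - S" d] assms by (simp add: card_Diff_subset finite_subset)
  ultimately show ?thesis
    using measure_pmf_of_set[OF ne fin] card_subsets by (simp add: miss_prob_def)
qed

lemma reverse_reachable_subset: "reverse_reachable V N B \<subseteq> V"
  by (auto simp: reverse_reachable_def)

lemma subset_reverse_reachable: "B \<subseteq> V \<Longrightarrow> B \<subseteq> reverse_reachable V N B"
  by (auto simp: reverse_reachable_def)

lemma out_nbhd_disjoint_reverse_reachable:
  assumes "x \<in> V" "x \<notin> reverse_reachable V N B"
  shows "N x \<inter> reverse_reachable V N B = {}"
proof (rule ccontr)
  assume "N x \<inter> reverse_reachable V N B \<noteq> {}"
  then obtain y b where "y \<in> N x" "b \<in> B" "(y, b) \<in> (edges V N)\<^sup>*"
    by (auto simp: reverse_reachable_def)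
  moreover from assms(1) \<open>y \<in> N x\<close> have "(x, y) \<in> edges V N"
    by (simp add: edges_def)
  ultimately have "(x, b) \<in> (edges V N)\<^sup>*"
    by (blast intro: converse_rtrancl_into_rtrancl)
  with assms \<open>b \<in> B\<close> show False
    by (auto simp: reverse_reachable_def)
qed

lemma out_nbhd_meets_reverse_reachable:
  assumes "B \<subseteq> V" "x \<in> reverse_reachable V N B - B"
  shows "N x \<inter> reverse_reachable V N B \<noteq> {}"
proof -
  obtain b where b: "b \<in> B" "(x, b) \<in> (edges V N)\<^sup>*" and "x \<noteq> b"
    using assms(2) by (auto simp: reverse_reachable_def)
  then obtain y where "(x, y) \<in> edges V N" and y: "(y, b) \<in> (edges V N)\<^sup>*"
    by (blast elim: converse_rtranclE)
  then have "y \<in> N x"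
    by (simp add: edges_def)
  have "y \<in> V" \<comment> \<open>either y = b \<in> B, or y has an out-neighbour\<close>
    using y b(1) assms(1) by (cases rule: converse_rtranclE) (auto simp: edges_def)
  with y b(1) \<open>y \<in> N x\<close> show ?thesis
    by (auto simp: reverse_reachable_def)
qed

lemma prob_reverse_closed:
  assumes V: "finite V" and S: "B \<subseteq> S" "S \<subseteq> V" and d: "\<forall>v\<in>V. d v \<le> card V"
  shows "measure_pmf.prob (out_nbhd_pmf V d)
      {N. (\<forall>v\<in>V - S. N v \<inter> S = {}) \<and> (\<forall>v\<in>S - B. N v \<inter> S \<noteq> {})}
    = (\<Prod>v\<in>V - S. miss_prob (card V) (card S) (d v))
      * (\<Prod>v\<in>S - B. 1 - miss_prob (card V) (card S) (d v))"
proof -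
  define X where "X v = {T. T \<subseteq> V \<and> card T = d v}" for v
  define q where "q v = miss_prob (card V) (card S) (d v)" for v
  define E where "E v = (if v \<in> V - S then {T. T \<inter> S = {}}
    else if v \<in> S - B then UNIV - {T. T \<inter> S = {}} else UNIV)" for v
  let ?P = "out_nbhd_pmf V d"
  let ?closed = "{N. (\<forall>v\<in>V - S. N v \<inter> S = {}) \<and> (\<forall>v\<in>S - B. N v \<inter> S \<noteq> {})}"
  have P: "?P = Pi_pmf V {} (\<lambda>v. pmf_of_set (X v))"
    unfolding out_nbhd_pmf_def X_def ..
  have "set_pmf ?P \<subseteq> {N. \<forall>v. v \<notin> V \<longrightarrow> N v = {}}"
    unfolding P set_Pi_pmf[OF V] PiE_dflt_def by auto
  then have "?closed \<inter> set_pmf ?P = PiE_dflt V {} E \<inter> set_pmf ?P"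
    using S by (auto simp: PiE_dflt_def E_def)
  then have "measure_pmf.prob ?P ?closed = measure_pmf.prob ?P (PiE_dflt V {} E)"
    using measure_Int_set_pmf[of ?P ?closed] measure_Int_set_pmf[of ?P "PiE_dflt V {} E"]
    by simp
  also have "\<dots> = (\<Prod>v\<in>V. measure_pmf.prob (pmf_of_set (X v)) (E v))"
    unfolding P by (rule measure_Pi_pmf_PiE_dflt[OF V])
  also have "\<dots> = (\<Prod>v\<in>V. (if v \<in> V - S then q v else 1) * (if v \<in> S - B then 1 - q v else 1))"
  proof (rule prod.cong)
    fix v assume "v \<in> V"
    have "measure_pmf.prob (pmf_of_set (X v)) {T. T \<inter> S = {}} = q v"
      unfolding X_def q_def using measure_pmf_of_subsets_disjoint[OF V S(2)] d \<open>v \<in> V\<close> by simp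
    then show "measure_pmf.prob (pmf_of_set (X v)) (E v)
        = (if v \<in> V - S then q v else 1) * (if v \<in> S - B then 1 - q v else 1)"
      using measure_pmf.prob_compl[of "{T. T \<inter> S = {}}" "pmf_of_set (X v)"]
      by (auto simp: E_def)
  qed simp
  also have "\<dots> = (\<Prod>v\<in>V - S. q v) * (\<Prod>v\<in>S - B. 1 - q v)"
    using S unfolding prod.distrib prod.inter_restrict[OF V, symmetric]
    by (simp add: Int_absorb1 Int_absorb2 Diff_subset_conv le_supI2)
  finally show ?thesis unfolding q_def .
qed

lemma sum_subsets_card_eq_le_generating:
  fixes a :: "'a \<Rightarrow> real" and l :: real
  assumes "finite M" "\<forall>v\<in>M. 0 \<le> a v \<and> a v \<le> 1" "1 \<le> l"
  shows "(\<Sum>T\<in>{T. T \<subseteq> M \<and> card T = r}. (\<Prod>v\<in>T. a v) * (\<Prod>v\<in>M - T. 1 - a v))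
     \<le> (\<Prod>v\<in>M. l * a v + (1 - a v)) / l ^ r"
proof -
  define w where "w T = (\<Prod>v\<in>T. a v) * (\<Prod>v\<in>M - T. 1 - a v)" for T
  have w_nonneg: "0 \<le> w T" if "T \<subseteq> M" for T
    unfolding w_def using assms(2) that by (intro mult_nonneg_nonneg prod_nonneg) auto
  have "(\<Sum>T\<in>{T. T \<subseteq> M \<and> card T = r}. w T)
      = (\<Sum>T\<in>{T. T \<subseteq> M \<and> card T = r}. l ^ card T / l ^ r * w T)"
    using assms(3) by (intro sum.cong) auto
  also have "\<dots> \<le> (\<Sum>T\<in>Pow M. l ^ card T / l ^ r * w T)"
    using assms(1,3) w_nonneg by (intro sum_mono2) auto
  also have "\<dots> = (\<Sum>T\<in>Pow M. (\<Prod>v\<in>T. l * a v) * (\<Prod>v\<in>M - T. 1 - a v)) / l ^ r"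
    unfolding sum_divide_distrib w_def
    using assms(1) by (intro sum.cong refl) (auto simp: prod.distrib dest: finite_subset)
  also have "\<dots> = (\<Prod>v\<in>M. l * a v + (1 - a v)) / l ^ r"
    using prod_add[OF assms(1), of "\<lambda>v. l * a v" "\<lambda>v. 1 - a v"] by simp
  finally show ?thesis
    unfolding w_def .
qed

lemma generating_bound_le_exp:
  fixes l p :: real and n r :: nat
  assumes "1 \<le> l" "0 \<le> p" "real r = p * real n"
  shows "(1 + (l - 1) * p^2) ^ n / l ^ r \<le> exp (real r * ((l - 1) * p + 1 / l - 1))"
proof -
  have "(1 + (l - 1) * p^2) ^ n \<le> exp ((l - 1) * p^2) ^ n"
    using assms by (intro power_mono) auto
  also have "\<dots> = exp (real r * ((l - 1) * p))"
    using assms(3) by (simp add: exp_of_nat_mult[symmetric] power2_eq_square mult_ac)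
  finally have numerator: "(1 + (l - 1) * p^2) ^ n \<le> exp (real r * ((l - 1) * p))" .
  have "1 / l ^ r = (1 / l) ^ r"
    by (simp add: power_one_over)
  also have "\<dots> \<le> exp (1 / l - 1) ^ r"
    using assms(1) exp_ge_add_one_self[of "1 / l - 1"] by (intro power_mono) auto
  also have "\<dots> = exp (real r * (1 / l - 1))"
    by (simp add: exp_of_nat_mult)
  finally have reciprocal: "1 / l ^ r \<le> exp (real r * (1 / l - 1))" .
  have "(1 + (l - 1) * p^2) ^ n / l ^ r = (1 + (l - 1) * p^2) ^ n * (1 / l ^ r)"
    by simp
  also have "\<dots> \<le> exp (real r * ((l - 1) * p)) * exp (real r * (1 / l - 1))"
    using numerator reciprocal assms(1) by (intro mult_mono) auto
  also have "\<dots> = exp (real r * ((l - 1) * p + 1 / l - 1))"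
    by (simp add: exp_add[symmetric] algebra_simps)
  finally show ?thesis .
qed

lemma sum_subsets_card_eq_le_exp:
  fixes a :: "'a \<Rightarrow> real" and p :: real and n r :: nat
  assumes M: "finite M" "card M \<le> n" and a: "\<forall>v\<in>M. 0 \<le> a v \<and> a v \<le> p^2"
    and p: "0 < p" "p < 1" and r: "real r = p * real n"
  shows "(\<Sum>T\<in>{T. T \<subseteq> M \<and> card T = r}. (\<Prod>v\<in>T. a v) * (\<Prod>v\<in>M - T. 1 - a v))
     \<le> exp (- real r * (1 - p)^2 / 4)"
proof -
  define l where "l = (1 + p) / (2 * p)"
  have l: "1 \<le> l"
    using p by (simp add: l_def field_simps)
  have "p^2 \<le> 1"
    using p by (simp add: power_le_one)
  with a have "\<forall>v\<in>M. 0 \<le> a v \<and> a v \<le> 1"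
    by force
  then have "(\<Sum>T\<in>{T. T \<subseteq> M \<and> card T = r}. (\<Prod>v\<in>T. a v) * (\<Prod>v\<in>M - T. 1 - a v))
      \<le> (\<Prod>v\<in>M. l * a v + (1 - a v)) / l ^ r"
    by (rule sum_subsets_card_eq_le_generating[OF M(1) _ l])
  also have "\<dots> \<le> (1 + (l - 1) * p^2) ^ n / l ^ r"
  proof (rule divide_right_mono)
    have "(\<Prod>v\<in>M. l * a v + (1 - a v)) \<le> (\<Prod>v\<in>M. 1 + (l - 1) * p^2)"
    proof (rule prod_mono)
      fix v assume "v \<in> M"
      with a \<open>p^2 \<le> 1\<close> have "0 \<le> a v" "a v \<le> p^2" "a v \<le> 1"
        by auto
      moreover from l \<open>a v \<le> p^2\<close> have "(l - 1) * a v \<le> (l - 1) * p^2"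
        by (intro mult_left_mono) auto
      moreover from l \<open>0 \<le> a v\<close> have "0 \<le> (l - 1) * a v"
        by simp
      ultimately show "0 \<le> l * a v + (1 - a v) \<and> l * a v + (1 - a v) \<le> 1 + (l - 1) * p^2"
        by (simp add: algebra_simps)
    qed
    also have "\<dots> \<le> (1 + (l - 1) * p^2) ^ n"
      using l M by (simp add: power_increasing)
    finally show "(\<Prod>v\<in>M. l * a v + (1 - a v)) \<le> (1 + (l - 1) * p^2) ^ n" .
    show "0 \<le> l ^ r"
      using l by simp
  qed
  also have "\<dots> \<le> exp (real r * ((l - 1) * p + 1 / l - 1))"
    using l p r by (intro generating_bound_le_exp) auto
  also have "\<dots> \<le> exp (- real r * (1 - p)^2 / 4)"
  proof -
    have "(l - 1) * p = (1 - p) / 2" "1 / l = 2 * p / (1 + p)"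
      using p by (simp_all add: l_def field_simps)
    moreover have "(1 - p) / 2 + 2 * p / (1 + p) - 1 = - ((1 - p)^2 / (2 * (1 + p)))"
      using p by (simp add: field_simps power2_eq_square)
    moreover have "(1 - p)^2 / 4 \<le> (1 - p)^2 / (2 * (1 + p))"
      using p by (intro divide_left_mono) auto
    ultimately have "(l - 1) * p + 1 / l - 1 \<le> - ((1 - p)^2 / 4)"
      by linarith
    then have "real r * ((l - 1) * p + 1 / l - 1) \<le> real r * - ((1 - p)^2 / 4)"
      by (rule mult_left_mono) simp
    then show ?thesis
      by simp
  qed
  finally show ?thesis .
qed

lemma prob_card_reverse_reachable_le_sum:
  assumes V: "finite V" "card V = n" "B \<subseteq> V" and d: "\<forall>v\<in>V. d v \<le> n"
  shows "measure_pmf.prob (out_nbhd_pmf V d) {N. card (reverse_reachable V N B) = k}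
    \<le> (\<Sum>T\<in>{T. T \<subseteq> V - B \<and> card T = n - k}.
          (\<Prod>v\<in>T. miss_prob n k (d v)) * (\<Prod>v\<in>(V - B) - T. 1 - miss_prob n k (d v)))"
proof -
  let ?P = "out_nbhd_pmf V d"
  define SS where "SS = {S. B \<subseteq> S \<and> S \<subseteq> V \<and> card S = k}"
  define closed where
    "closed S = {N. (\<forall>v\<in>V - S. N v \<inter> S = {}) \<and> (\<forall>v\<in>S - B. N v \<inter> S \<noteq> {})}" for S
  define w where
    "w T = (\<Prod>v\<in>T. miss_prob n k (d v)) * (\<Prod>v\<in>(V - B) - T. 1 - miss_prob n k (d v))" for T
  have "finite SS"
    using V(1) by (auto simp: SS_def intro: finite_subset[of _ "Pow V"])
  have "{N. card (reverse_reachable V N B) = k} \<subseteq> (\<Union>S\<in>SS. closed S)"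
  proof
    fix N assume "N \<in> {N. card (reverse_reachable V N B) = k}"
    then have "reverse_reachable V N B \<in> SS"
      using V(3) by (simp add: SS_def reverse_reachable_subset subset_reverse_reachable)
    moreover have "N \<in> closed (reverse_reachable V N B)"
      using V(3) by (auto simp: closed_def out_nbhd_disjoint_reverse_reachable
          out_nbhd_meets_reverse_reachable)
    ultimately show "N \<in> (\<Union>S\<in>SS. closed S)"
      by blast
  qed
  then have "measure_pmf.prob ?P {N. card (reverse_reachable V N B) = k}
      \<le> measure_pmf.prob ?P (\<Union>S\<in>SS. closed S)"
    by (intro measure_pmf.finite_measure_mono) auto
  also have "\<dots> \<le> (\<Sum>S\<in>SS. measure_pmf.prob ?P (closed S))"
    using \<open>finite SS\<close> by (intro measure_pmf.finite_measure_subadditive_finite) auto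
  also have "\<dots> = (\<Sum>S\<in>SS. w (V - S))"
  proof (rule sum.cong)
    fix S assume "S \<in> SS"
    then have S: "B \<subseteq> S" "S \<subseteq> V" "card S = k"
      by (auto simp: SS_def)
    moreover have "S - B = (V - B) - (V - S)"
      using S by auto
    ultimately show "measure_pmf.prob ?P (closed S) = w (V - S)"
      unfolding closed_def w_def using prob_reverse_closed[OF V(1) S(1,2)] V(2) d by simp
  qed simp
  also have "\<dots> = (\<Sum>T\<in>(\<lambda>S. V - S) ` SS. w T)"
    by (rule sum.reindex_cong[symmetric]) (auto simp: SS_def inj_on_def)
  also have "\<dots> \<le> (\<Sum>T\<in>{T. T \<subseteq> V - B \<and> card T = n - k}. w T)"
  proof (rule sum_mono2)
    show "finite {T. T \<subseteq> V - B \<and> card T = n - k}"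
      using V(1) by auto
    show "(\<lambda>S. V - S) ` SS \<subseteq> {T. T \<subseteq> V - B \<and> card T = n - k}"
      using V by (auto simp: SS_def card_Diff_subset finite_subset)
    show "0 \<le> w T" for T
      unfolding w_def
      by (intro mult_nonneg_nonneg prod_nonneg) (simp_all add: miss_prob_nonneg miss_prob_le_one)
  qed
  finally show ?thesis
    unfolding w_def .
qed

lemma prob_card_reverse_reachable_le_exp:
  fixes c1 c2 :: real
  assumes c: "0 < c1" "c1 \<le> c2" "c2 < 1"
    and V: "finite V" "card V = n" "B \<subseteq> V" and "0 < n"
    and d: "\<forall>v\<in>V. 2 \<le> d v \<and> d v \<le> n"
    and k: "c1 * real n \<le> real k" "real k \<le> c2 * real n"
  shows "measure_pmf.prob (out_nbhd_pmf V d) {N. card (reverse_reachable V N B) = k}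
    \<le> exp (- (c1^2 * (1 - c2) / 4) * real n)"
proof -
  define p where "p = 1 - real k / real n"
  have "k < n" "0 < k"
    using c k \<open>0 < n\<close> mult_strict_right_mono[of c2 1 "real n"] mult_pos_pos[of c1 "real n"]
    by linarith+
  then have p: "0 < p" "p < 1"
    using \<open>0 < n\<close> by (simp_all add: p_def)
  have r: "real (n - k) = p * real n"
    using \<open>0 < n\<close> \<open>k < n\<close> by (simp add: p_def algebra_simps)
  have miss: "\<forall>v\<in>V - B. 0 \<le> miss_prob n k (d v) \<and> miss_prob n k (d v) \<le> p^2"
    using d \<open>k < n\<close> unfolding p_def by (auto intro!: miss_prob_nonneg miss_prob_le_square)
  have "card (V - B) \<le> n"
    using card_mono[OF V(1), of "V - B"] V(2) by auto
  have "measure_pmf.prob (out_nbhd_pmf V d) {N. card (reverse_reachable V N B) = k}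
      \<le> (\<Sum>T\<in>{T. T \<subseteq> V - B \<and> card T = n - k}.
          (\<Prod>v\<in>T. miss_prob n k (d v)) * (\<Prod>v\<in>(V - B) - T. 1 - miss_prob n k (d v)))"
    using d by (intro prob_card_reverse_reachable_le_sum[OF V]) auto
  also have "\<dots> \<le> exp (- real (n - k) * (1 - p)^2 / 4)"
    using V(1) \<open>card (V - B) \<le> n\<close> miss p r by (intro sum_subsets_card_eq_le_exp) auto
  also have "\<dots> \<le> exp (- (c1^2 * (1 - c2) / 4) * real n)"
  proof -
    from k(1) \<open>0 < n\<close> have "c1 \<le> 1 - p"
      by (simp add: p_def pos_le_divide_eq)
    then have "c1^2 \<le> (1 - p)^2"
      using c(1) by (intro power_mono) auto
    moreover have "(1 - c2) * real n \<le> real (n - k)"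
      using k(2) \<open>k < n\<close> by (simp add: algebra_simps)
    ultimately have "c1^2 * ((1 - c2) * real n) \<le> (1 - p)^2 * real (n - k)"
      using c by (intro mult_mono) auto
    then show ?thesis
      by (simp add: algebra_simps)
  qed
  finally show ?thesis .
qed

lemma exp_neg_linear_le_inverse_square:
  fixes c :: real
  assumes "0 < c"
  shows "\<exists>N. \<forall>n\<ge>N. exp (- c * real n) \<le> 1 / (real n)^2"
proof -
  have "eventually (\<lambda>n. exp (- c * real n) \<le> 1 / (real n)^2) sequentially"
    using assms by real_asymp
  then show ?thesis
    by (simp add: eventually_sequentially)
qed

theorem lemma14:
  fixes dmin dmax :: nat and c1 c2 :: real
  assumes "2 \<le> dmin" and "dmin \<le> dmax"
    and "0 < c1" and "c1 \<le> c2" and "c2 < 1"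
  shows "\<exists>N0::nat. \<forall>n \<ge> N0. \<forall>(V::nat set) (B::nat set) (d::nat \<Rightarrow> nat) (k::nat).
           finite V \<longrightarrow> card V = n \<longrightarrow> B \<subseteq> V \<longrightarrow> real (card B) \<le> c2 * real n \<longrightarrow>
           (\<forall>v\<in>V. dmin \<le> d v \<and> d v \<le> dmax) \<longrightarrow>
           c1 * real n \<le> real k \<longrightarrow> real k \<le> c2 * real n \<longrightarrow>
           measure_pmf.prob (out_nbhd_pmf V d)
             {N. card (reverse_reachable V N B) = k} \<le> 1 / (real n)\<^sup>2"
proof -
  have "0 < c1^2 * (1 - c2) / 4"
    using assms by simp
  then obtain N1 where N1: "\<forall>n\<ge>N1. exp (- (c1^2 * (1 - c2) / 4) * real n) \<le> 1 / (real n)^2"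
    using exp_neg_linear_le_inverse_square by blast
  show ?thesis
  proof (intro exI[of _ "max N1 (dmax + 1)"] allI impI)
    fix n :: nat and V B :: "nat set" and d :: "nat \<Rightarrow> nat" and k :: nat
    assume "max N1 (dmax + 1) \<le> n" and V: "finite V" "card V = n" "B \<subseteq> V"
      and "\<forall>v\<in>V. dmin \<le> d v \<and> d v \<le> dmax"
      and k: "c1 * real n \<le> real k" "real k \<le> c2 * real n"
    moreover from this assms(1) have "\<forall>v\<in>V. 2 \<le> d v \<and> d v \<le> n"
      by force
    ultimately have "measure_pmf.prob (out_nbhd_pmf V d) {N. card (reverse_reachable V N B) = k}
        \<le> exp (- (c1^2 * (1 - c2) / 4) * real n)"
      by (intro prob_card_reverse_reachable_le_exp[OF assms(3-5) V _ _ k]) auto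
    also have "\<dots> \<le> 1 / (real n)\<^sup>2"
      using N1 \<open>max N1 (dmax + 1) \<le> n\<close> by simp
    finally show "measure_pmf.prob (out_nbhd_pmf V d)
        {N. card (reverse_reachable V N B) = k} \<le> 1 / (real n)\<^sup>2" .
  qed
qed
end
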